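(* Let $f_{\boldsymbol{\theta}}$ be the conformer aggregation network described in the context, with fixed parameters $\boldsymbol{\theta}$. Let $G$ be the 2D graph of a molecule and let $(S_1,\dots,S_K)$, with $S_k=\{(\mathbf{r}_{k,i},Z_{k,i})\}_{i=1}^N$ for $1\le k\le K$, be a sequence of $K$ conformers of that molecule, and let $\hat y=f_{\boldsymbol{\theta}}(G,(S_1,\dots,S_K))$. Then: (i) for any $g_1,\dots,g_K\in E(3)$, $$f_{\boldsymbol{\theta}}(G,(g_1S_1,\dots,g_KS_K))=f_{\boldsymbol{\theta}}(G,(S_1,\dots,S_K));$$ (ii) for any permutation $\pi\in\mathrm{Sym}([K])$, $$f_{\boldsymbol{\theta}}(G,(S_{\pi(1)},\dots,S_{\pi(K)}))=f_{\boldsymbol{\theta}}(G,(S_1,\dots,S_K)).$$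
   Context: $E(3)$ is the Euclidean group of $\mathbb{R}^3$ (translations, rotations, reflections/inversion); $g\in E(3)$, $g(\mathbf r)=Q\mathbf r+\mathbf t$ with $Q$ orthogonal, acts on a conformer by $gS=\{(g(\mathbf r_i),Z_i)\}_{i=1}^N$ (atomic numbers unchanged). $[K]=\{1,\dots,K\}$. 2D branch: the molecule's 2D graph is $G=(V,E)$ (atoms as nodes, covalent bonds as edges) with node features $\mathbf h_v^{(0)}$ and edge features. $L$ graph-attention (GAT) layers compute $\mathbf h_v^{(\ell)}=\sum_{u\in N(v)}\alpha_{v,u}\mathbf W\mathbf h_u^{(\ell-1)}$, where $\alpha_{v,u}$ are attention coefficients produced by a single-layer feedforward network from the node features and $\mathbf W$ is a learnable matrix; the 2D embedding is $\mathbf h^{2D}_G=\sum_{v\in V}\mathbf h_v^{(L)}$. 3D branch: a conformer is $S=\{(\mathbf r_i,Z_i)\}_{i=1}^N$ with $\mathbf r_i\in\mathbb R^3$ Cartesian coordinates and $Z_i\in\mathbb N$ atomic numbers. A geometric message-passing network (e.g. SchNet) that is $E(3)$-invariant (its per-atom outputs depend on coordinates only through interatomic distances) produces per-atom features $\mathbf h_v^{(L)}$, collected as rows of a matrix $\mathbf H_k$ for conformer $S_k$. The conformer embedding is $\mathbf h^{3D}_{S_k}=\sum_{v}(\mathbf A\mathbf h_v^{(L)}+\mathbf a)$ with learnable $\mathbf A,\mathbf a$, and $\mathbf H^{3D}$ is the matrix whose $k$-th column is $\mathbf h^{3D}_{S_k}$. Barycenter branch: each conformer gives an attributed graph $G_k=(\mathbf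 H_k,\mathbf A_k,\boldsymbol\omega_k)$ where $\mathbf A_k$ is the matrix of pairwise interatomic distances (possibly with a cutoff radius) and $\boldsymbol\omega_k=\mathbf 1_N/N$. For attributed graphs $G_1=(\mathbf H_1,\mathbf A_1,\boldsymbol\omega_1)$, $G_2=(\mathbf H_2,\mathbf A_2,\boldsymbol\omega_2)$ of orders $n_1,n_2$, the fused Gromov–Wasserstein distance is $$\mathrm{FGW}_{p,\alpha}(G_1,G_2)=\min_{\boldsymbol\pi\in\Pi(\boldsymbol\omega_1,\boldsymbol\omega_2)}\sum_{i,j,k,l}\Big[(1-\alpha)\,\|\mathbf H_1[i]-\mathbf H_2[j]\|^p+\alpha\,|\mathbf A_1[i,k]-\mathbf A_2[j,l]|^p\Big]\pi_{ij}\pi_{kl},$$ where $\Pi(\boldsymbol\omega_1,\boldsymbol\omega_2)=\{\boldsymbol\pi\in\mathbb R_{\ge0}^{n_1\times n_2}:\boldsymbol\pi\mathbf 1=\boldsymbol\omega_1,\ \boldsymbol\pi^\top\mathbf 1=\boldsymbol\omega_2\}$ and $\alpha\in[0,1]$. The FGW barycenter $\overline G=(\overline{\mathbf H},\overline{\mathbf A},\overline{\boldsymbol\omega})$ is the (taken to be unique) minimizer of $G\mapsto\sum_{k=1}^K\frac1K\mathrm{FGW}_{p,\alpha}(G,G_k)$, and $\mathbf h^{BC}=\sum_v(\overline{\mathbf A}\,\overline{\mathbf H}[v]+\overline{\mathbf a})$ with learnable $\overline{\mathbf A},\overline{\mathbf a}$. Combination: $\mathbf H^{2D}$ and $\mathbf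 H^{BC}$ are the matrices with $K$ columns each equal to $\mathbf h^{2D}_G$, respectively $\mathbf h^{BC}$. With learnable matrices $\mathbf W^{2D},\mathbf W^{3D},\mathbf W^{BC}$, set $\mathbf H^{comb}=\mathbf W^{2D}\mathbf H^{2D}+\mathbf W^{3D}\mathbf H^{3D}+\mathbf W^{BC}\mathbf H^{BC}$, and the output is $\hat y=f_{\boldsymbol\theta}(G,(S_1,\dots,S_K))=\mathbf W^G\big(\frac1K\sum_{k=1}^K\mathbf H^{comb}[k]\big)+\mathbf b^G$, where $\mathbf H^{comb}[k]$ is the $k$-th column and $\boldsymbol\theta$ collects all learnable parameters. *)

theory Defs
  imports "HOL-Analysis.Analysis"
begin

text \<open>A conformer is a list of atoms (Cartesian coordinates, atomic number);
  its length is the number of atoms N.\<close>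
type_synonym conformer = "((real^3) \<times> nat) list"

type_synonym e3 = "(real^3^3) \<times> (real^3)"

definition E3 :: "e3 set" where
  "E3 = {(Q, t). orthogonal_matrix Q}"

definition e3_act :: "e3 \<Rightarrow> conformer \<Rightarrow> conformer" where
  "e3_act g S = map (\<lambda>(r, z). (fst g *v r + snd g, z)) S"

text \<open>Nodes are 0..<nV; nbr v is the neighbourhood N(v); x0 v the initial node features.\<close>
record 'a mol2d =
  nV :: nat
  nbr :: "nat \<Rightarrow> nat set"
  x0 :: "nat \<Rightarrow> real^'a"

record 'b agraph =
  ord :: nat
  feat :: "nat \<Rightarrow> real^'b"
  adj :: "nat \<Rightarrow> nat \<Rightarrow> real"
  wt :: "nat \<Rightarrow> real"

definition valid_agraph :: "('b::finite) agraph \<Rightarrow> bool" where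
  "valid_agraph G \<longleftrightarrow> (\<forall>i<ord G. wt G i \<ge> 0) \<and> (\<Sum>i<ord G. wt G i) = 1"

definition couplings :: "('b::finite) agraph \<Rightarrow> 'b agraph \<Rightarrow> (nat \<Rightarrow> nat \<Rightarrow> real) set" where
  "couplings G1 G2 = {\<pi>.
     (\<forall>i<ord G1. \<forall>j<ord G2. \<pi> i j \<ge> 0) \<and>
     (\<forall>i<ord G1. (\<Sum>j<ord G2. \<pi> i j) = wt G1 i) \<and>
     (\<forall>j<ord G2. (\<Sum>i<ord G1. \<pi> i j) = wt G2 j)}"

definition fgw_cost :: "real \<Rightarrow> real \<Rightarrow> ('b::finite) agraph \<Rightarrow> 'b agraph \<Rightarrow> (nat \<Rightarrow> nat \<Rightarrow> real) \<Rightarrow> real" where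
  "fgw_cost p \<alpha> G1 G2 \<pi> =
     (\<Sum>i<ord G1. \<Sum>j<ord G2. \<Sum>k<ord G1. \<Sum>l<ord G2.
        ((1 - \<alpha>) * norm (feat G1 i - feat G2 j) powr p
          + \<alpha> * \<bar>adj G1 i k - adj G2 j l\<bar> powr p) * \<pi> i j * \<pi> k l)"

definition FGW :: "real \<Rightarrow> real \<Rightarrow> ('b::finite) agraph \<Rightarrow> 'b agraph \<Rightarrow> real" where
  "FGW p \<alpha> G1 G2 = Inf (fgw_cost p \<alpha> G1 G2 ` couplings G1 G2)"

text \<open>FGW barycenter of a list of attributed graphs (weights 1/K): the minimizer
  (assumed unique in the paper; here taken with THE) of the barycentric objective.\<close>
definition fgw_objective :: "real \<Rightarrow> real \<Rightarrow> ('b::finite) agraph list \<Rightarrow> 'b agraph \<Rightarrow> real" where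
  "fgw_objective p \<alpha> Gs G = (\<Sum>k<length Gs. (1 / real (length Gs)) * FGW p \<alpha> G (Gs ! k))"

definition fgw_barycenter :: "real \<Rightarrow> real \<Rightarrow> ('b::finite) agraph list \<Rightarrow> 'b agraph" where
  "fgw_barycenter p \<alpha> Gs = (THE G. valid_agraph G \<and>
     (\<forall>G'. valid_agraph G' \<longrightarrow> fgw_objective p \<alpha> Gs G \<le> fgw_objective p \<alpha> Gs G'))"

record ('a, 'b, 'c, 'd, 'e, 'o) cparams =
  nlayers :: nat
  Wgat :: "real^'a^'a"
  att :: "(nat \<Rightarrow> real^'a) \<Rightarrow> nat \<Rightarrow> nat \<Rightarrow> real"   \<comment> \<open>attention coefficients alpha_{v,u} from current node features\<close>
  net3d :: "conformer \<Rightarrow> nat \<Rightarrow> real^'b"           \<comment> \<open>geometric MPNN, per-atom features h_v^{(L)}\<close>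
  A3 :: "real^'b^'c"
  a3 :: "real^'c"
  cutoff :: "real \<Rightarrow> real"
  pFGW :: real
  alphaFGW :: real
  Abc :: "real^'b^'d"
  abc :: "real^'d"
  W2D :: "real^'a^'e"
  W3D :: "real^'c^'e"
  WBC :: "real^'d^'e"
  WG :: "real^'e^'o"
  bG :: "real^'o"

text \<open>E(3)-invariance of the 3D backbone: per-atom outputs depend on the coordinates only
  through the interatomic distances (atomic numbers being the same).\<close>
definition dist_invariant :: "(conformer \<Rightarrow> nat \<Rightarrow> real^('b::finite)) \<Rightarrow> bool" where
  "dist_invariant net \<longleftrightarrow> (\<forall>S S'. length S = length S' \<and> map snd S = map snd S' \<and>
      (\<forall>i<length S. \<forall>j<length S. dist (fst (S ! i)) (fst (S ! j)) = dist (fst (S' ! i)) (fst (S' ! j)))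
      \<longrightarrow> (\<forall>v<length S. net S v = net S' v))"

fun gat :: "('a::finite, 'b::finite, 'c::finite, 'd::finite, 'e::finite, 'o::finite, 'z) cparams_scheme \<Rightarrow> 'a mol2d \<Rightarrow> nat \<Rightarrow> nat \<Rightarrow> real^'a" where
  "gat \<theta> G 0 = x0 G"
| "gat \<theta> G (Suc l) = (\<lambda>v. \<Sum>u\<in>nbr G v. att \<theta> (gat \<theta> G l) v u *\<^sub>R (Wgat \<theta> *v gat \<theta> G l u))"

definition h2D :: "('a::finite, 'b::finite, 'c::finite, 'd::finite, 'e::finite, 'o::finite, 'z) cparams_scheme \<Rightarrow> 'a mol2d \<Rightarrow> real^'a" where
  "h2D \<theta> G = (\<Sum>v<nV G. gat \<theta> G (nlayers \<theta>) v)"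

definition h3D :: "('a::finite, 'b::finite, 'c::finite, 'd::finite, 'e::finite, 'o::finite, 'z) cparams_scheme \<Rightarrow> conformer \<Rightarrow> real^'c" where
  "h3D \<theta> S = (\<Sum>v<length S. A3 \<theta> *v net3d \<theta> S v + a3 \<theta>)"

definition conf_graph :: "('a::finite, 'b::finite, 'c::finite, 'd::finite, 'e::finite, 'o::finite, 'z) cparams_scheme \<Rightarrow> conformer \<Rightarrow> 'b agraph" where
  "conf_graph \<theta> S = \<lparr>ord = length S, feat = net3d \<theta> S,
      adj = (\<lambda>i j. cutoff \<theta> (dist (fst (S ! i)) (fst (S ! j)))),
      wt = (\<lambda>i. 1 / real (length S))\<rparr>"

definition hBC :: "('a::finite, 'b::finite, 'c::finite, 'd::finite, 'e::finite, 'o::finite, 'z) cparams_scheme \<Rightarrow> conformer list \<Rightarrow> real^'d" where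
  "hBC \<theta> Ss = (let B = fgw_barycenter (pFGW \<theta>) (alphaFGW \<theta>) (map (conf_graph \<theta>) Ss)
               in \<Sum>v<ord B. Abc \<theta> *v feat B v + abc \<theta>)"

text \<open>f_theta(G, (S_1,...,S_K)); the k-th column of H^comb is
  W2D h2D + W3D h3D(S_k) + WBC hBC.\<close>
definition f_net :: "('a::finite, 'b::finite, 'c::finite, 'd::finite, 'e::finite, 'o::finite, 'z) cparams_scheme \<Rightarrow> 'a mol2d \<Rightarrow> conformer list \<Rightarrow> real^'o" where
  "f_net \<theta> G Ss =
     WG \<theta> *v ((1 / real (length Ss)) *\<^sub>R
        (\<Sum>k<length Ss. W2D \<theta> *v h2D \<theta> G + W3D \<theta> *v h3D \<theta> (Ss ! k) + WBC \<theta> *v hBC \<theta> Ss))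
     + bG \<theta>"

end

theory Submission
  imports Defs
begin

text \<open>Each conformer enters the network only through its 3D embedding and its attributed
  graph; both are built from distance-invariant per-atom features and interatomic distances,
  which rigid motions preserve, giving (i). The conformers themselves are combined only by
  averages over k and by the barycentric objective, a sum over k, so the output depends only
  on the multiset of conformers, giving (ii).\<close>

lemma dist_orthogonal_matrix:
  fixes Q :: "real^'n^'n"
  assumes "orthogonal_matrix Q"
  shows "dist (Q *v a) (Q *v b) = dist a b"
proof -
  have "orthogonal_transformation (\<lambda>x. Q *v x)"
    using assms by (simp add: orthogonal_transformation_matrix)
  then have "norm (Q *v (a - b)) = norm (a - b)"
    by (rule orthogonal_transformation_norm)
  then show ?thesis
    by (simp add: dist_norm matrix_vector_mult_diff_distrib)
qed

lemma length_e3_act [simp]: "length (e3_act g S) = length S"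
  by (simp add: e3_act_def)

lemma map_snd_e3_act [simp]: "map snd (e3_act g S) = map snd S"
  by (simp add: e3_act_def split_def)

lemma dist_e3_act:
  assumes "g \<in> E3" "i < length S" "j < length S"
  shows "dist (fst (e3_act g S ! i)) (fst (e3_act g S ! j)) = dist (fst (S ! i)) (fst (S ! j))"
proof -
  obtain Q t where "g = (Q, t)" "orthogonal_matrix Q"
    using assms(1) by (cases g) (auto simp: E3_def)
  then show ?thesis
    using assms(2,3) by (simp add: e3_act_def split_def dist_orthogonal_matrix)
qed

lemma dist_invariant_e3_act:
  assumes "dist_invariant net" "g \<in> E3" "v < length S"
  shows "net (e3_act g S) v = net S v"
  using assms dist_e3_act[OF assms(2)] unfolding dist_invariant_def by simp

lemma h3D_e3_act:
  assumes "dist_invariant (net3d \<theta>)" "g \<in> E3"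
  shows "h3D \<theta> (e3_act g S) = h3D \<theta> S"
  unfolding h3D_def using dist_invariant_e3_act[OF assms] by simp

lemma FGW_cong:
  assumes "ord H' = ord H"
    and "\<And>i. i < ord H \<Longrightarrow> feat H' i = feat H i"
    and "\<And>i. i < ord H \<Longrightarrow> wt H' i = wt H i"
    and "\<And>i k. i < ord H \<Longrightarrow> k < ord H \<Longrightarrow> adj H' i k = adj H i k"
  shows "FGW p \<alpha> G H' = FGW p \<alpha> G H"
proof -
  have "couplings G H' = couplings G H"
    unfolding couplings_def using assms by auto
  moreover have "fgw_cost p \<alpha> G H' \<pi> = fgw_cost p \<alpha> G H \<pi>" for \<pi>
    unfolding fgw_cost_def using assms by (intro sum.cong refl) auto
  ultimately show ?thesis
    unfolding FGW_def by simp
qed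

lemma FGW_conf_graph_e3_act:
  assumes "dist_invariant (net3d \<theta>)" "g \<in> E3"
  shows "FGW p \<alpha> B (conf_graph \<theta> (e3_act g S)) = FGW p \<alpha> B (conf_graph \<theta> S)"
  by (rule FGW_cong)
    (simp_all add: conf_graph_def dist_invariant_e3_act[OF assms] dist_e3_act[OF assms(2)])

lemma hBC_cong:
  assumes "\<And>B. fgw_objective (pFGW \<theta>) (alphaFGW \<theta>) (map (conf_graph \<theta>) Ss') B
              = fgw_objective (pFGW \<theta>) (alphaFGW \<theta>) (map (conf_graph \<theta>) Ss) B"
  shows "hBC \<theta> Ss' = hBC \<theta> Ss"
  unfolding hBC_def fgw_barycenter_def assms ..

lemma f_net_cong:
  assumes "length Ss' = length Ss" "hBC \<theta> Ss' = hBC \<theta> Ss"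
    and "(\<Sum>k<length Ss. h3D \<theta> (Ss' ! k)) = (\<Sum>k<length Ss. h3D \<theta> (Ss ! k))"
  shows "f_net \<theta> G Ss' = f_net \<theta> G Ss"
proof -
  have "(\<Sum>k<length Ss. W3D \<theta> *v h3D \<theta> (Ss' ! k)) = (\<Sum>k<length Ss. W3D \<theta> *v h3D \<theta> (Ss ! k))"
    using assms(3) by (simp flip: vec.sum)
  then show ?thesis
    unfolding f_net_def assms(1,2) sum.distrib by simp
qed

lemma f_net_e3_act:
  assumes "dist_invariant (net3d \<theta>)" "\<And>k. k < length Ss \<Longrightarrow> gs k \<in> E3"
  shows "f_net \<theta> G (map (\<lambda>k. e3_act (gs k) (Ss ! k)) [0..<length Ss]) = f_net \<theta> G Ss"
proof (rule f_net_cong)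
  show "hBC \<theta> (map (\<lambda>k. e3_act (gs k) (Ss ! k)) [0..<length Ss]) = hBC \<theta> Ss"
    by (rule hBC_cong)
      (auto simp: fgw_objective_def FGW_conf_graph_e3_act[OF assms(1,2)] intro!: sum.cong)
qed (auto simp: h3D_e3_act[OF assms(1,2)] intro!: sum.cong)

lemma sum_nth_mset_cong:
  assumes "mset xs = mset ys"
  shows "(\<Sum>k<length xs. f (xs ! k)) = (\<Sum>k<length ys. f (ys ! k))"
proof -
  have "(\<Sum>k<length xs. f (xs ! k)) = sum_mset (image_mset f (mset xs))" for xs
  proof -
    have "(\<Sum>k<length xs. f (xs ! k)) = sum_list (map f xs)"
      by (simp add: sum_list_sum_nth atLeast0LessThan)
    then show ?thesis
      using sum_mset_sum_list[of "map f xs"] by simp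
  qed
  then show ?thesis
    using assms by simp
qed

lemma fgw_objective_mset_cong:
  assumes "mset Gs' = mset Gs"
  shows "fgw_objective p \<alpha> Gs' B = fgw_objective p \<alpha> Gs B"
proof -
  have "length Gs' = length Gs"
    using assms by (metis size_mset)
  then show ?thesis
    unfolding fgw_objective_def using sum_nth_mset_cong[OF assms] by simp
qed

lemma f_net_mset_cong:
  assumes "mset Ss' = mset Ss"
  shows "f_net \<theta> G Ss' = f_net \<theta> G Ss"
proof (rule f_net_cong)
  show "length Ss' = length Ss"
    using assms by (metis size_mset)
  then show "(\<Sum>k<length Ss. h3D \<theta> (Ss' ! k)) = (\<Sum>k<length Ss. h3D \<theta> (Ss ! k))"
    using sum_nth_mset_cong[OF assms] by metis
  show "hBC \<theta> Ss' = hBC \<theta> Ss"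
    using assms by (intro hBC_cong fgw_objective_mset_cong) simp
qed

theorem theorem3p1:
  fixes \<theta> :: "('a::finite, 'b::finite, 'c::finite, 'd::finite, 'e::finite, 'o::finite) cparams"
    and G :: "'a mol2d"
    and Ss :: "conformer list"
  assumes "dist_invariant (net3d \<theta>)"
  shows "(\<forall>gs :: nat \<Rightarrow> e3. (\<forall>k<length Ss. gs k \<in> E3) \<longrightarrow>
            f_net \<theta> G (map (\<lambda>k. e3_act (gs k) (Ss ! k)) [0..<length Ss]) = f_net \<theta> G Ss)
       \<and> (\<forall>\<pi>. \<pi> permutes {..<length Ss} \<longrightarrow>
            f_net \<theta> G (map (\<lambda>k. Ss ! \<pi> k) [0..<length Ss]) = f_net \<theta> G Ss)"
proof (intro conjI allI impI)
  fix gs :: "nat \<Rightarrow> e3"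
  assume "\<forall>k<length Ss. gs k \<in> E3"
  then show "f_net \<theta> G (map (\<lambda>k. e3_act (gs k) (Ss ! k)) [0..<length Ss]) = f_net \<theta> G Ss"
    using assms by (intro f_net_e3_act) simp_all
next
  fix \<pi>
  assume "\<pi> permutes {..<length Ss}"
  then have "mset (permute_list \<pi> Ss) = mset Ss"
    by (rule mset_permute_list)
  then show "f_net \<theta> G (map (\<lambda>k. Ss ! \<pi> k) [0..<length Ss]) = f_net \<theta> G Ss"
    unfolding permute_list_def by (rule f_net_mset_cong)
qed

end
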